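(* Let $K$ be a field and let $A$ be a finitely generated $K$-algebra of finite GK dimension, and let $V$ be a finite-dimensional $K$-subspace of $A$ that contains $1$ and generates $A$ as a $K$-algebra. Then there is a constant $C>0$ such that $$\dim_K(V^n)\;>\;C\,n\,\dim_K(V^{n+1}/V^n)$$ for infinitely many positive integers $n$.
   Context: $V^n$ denotes the $K$-linear span of all products of $n$ elements of $V$; since $1\in V$, $V^n\subseteq V^{n+1}$. $\mathrm{GKdim}(A)=\limsup_{n\to\infty}\log\dim_K(V^n)/\log n$. *)

theory Defs
  imports Complex_Main "HOL-Library.Liminf_Limsup" "HOL-Library.Extended_Real"
begin

definition algebra_over :: "('k::field \<Rightarrow> 'a::ring_1 \<Rightarrow> 'a) \<Rightarrow> bool" where
  "algebra_over scale \<longleftrightarrow> vector_space scale \<and>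
     (\<forall>c x y. scale c (x * y) = scale c x * y) \<and>
     (\<forall>c x y. scale c (x * y) = x * scale c y)"

definition subalgebra :: "('k::field \<Rightarrow> 'a::ring_1 \<Rightarrow> 'a) \<Rightarrow> 'a set \<Rightarrow> bool" where
  "subalgebra scale B \<longleftrightarrow> module.subspace scale B \<and> 1 \<in> B \<and> (\<forall>x\<in>B. \<forall>y\<in>B. x * y \<in> B)"

definition gen_subalgebra :: "('k::field \<Rightarrow> 'a::ring_1 \<Rightarrow> 'a) \<Rightarrow> 'a set \<Rightarrow> 'a set" where
  "gen_subalgebra scale S = \<Inter>{B. subalgebra scale B \<and> S \<subseteq> B}"

definition Vpow :: "('k::field \<Rightarrow> 'a::ring_1 \<Rightarrow> 'a) \<Rightarrow> 'a set \<Rightarrow> nat \<Rightarrow> 'a set" where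
  "Vpow scale V n = module.span scale {prod_list xs | xs. length xs = n \<and> set xs \<subseteq> V}"

definition fin_dim_subspace :: "('k::field \<Rightarrow> 'a::ring_1 \<Rightarrow> 'a) \<Rightarrow> 'a set \<Rightarrow> bool" where
  "fin_dim_subspace scale V \<longleftrightarrow> module.subspace scale V \<and> (\<exists>B. finite B \<and> module.span scale B = V)"

definition GKdim_wrt :: "('k::field \<Rightarrow> 'a::ring_1 \<Rightarrow> 'a) \<Rightarrow> 'a set \<Rightarrow> ereal" where
  "GKdim_wrt scale V = limsup (\<lambda>n. ereal (ln (real (vector_space.dim scale (Vpow scale V n))) / ln (real n)))"

end

theory Submission
  imports Defs
begin

text \<open>Write d n for dim V^n. If the inequality failed with C = 1/k for all large n, then
  n d(n+1) \<ge> (n + k) d n eventually, so d grows at least like the Pochhammer symbol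
  n (n+1) \<cdots> (n+k-1) \<ge> n^k. Finite GK dimension bounds d n by n^m for large n, and
  k = m + 1 gives a contradiction.\<close>

lemma power_le_pochhammer:
  fixes a :: real
  assumes "a \<ge> 0"
  shows "a ^ k \<le> pochhammer a k"
proof (induction k)
  case 0
  then show ?case by simp
next
  case (Suc k)
  have "a ^ Suc k = a * a ^ k" by simp
  also have "\<dots> \<le> (a + of_nat k) * pochhammer a k"
    using Suc assms by (intro mult_mono) auto
  finally show ?case by (simp add: pochhammer_rec')
qed

lemma pochhammer_le_of_increments:
  fixes d :: "nat \<Rightarrow> real"
  assumes "0 < N"
    and increment: "\<And>n. N \<le> n \<Longrightarrow> d n * (real n + real k) \<le> d (Suc n) * real n"
    and "N \<le> n"
  shows "d N * pochhammer (real n) k \<le> d n * pochhammer (real N) k"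
  using \<open>N \<le> n\<close>
proof (induction n rule: dec_induct)
  case base
  then show ?case by simp
next
  case (step n)
  let ?P = "\<lambda>n. pochhammer (real n) k"
  have "0 < n" "0 \<le> ?P N"
    using \<open>0 < N\<close> step(1) by (auto intro: pochhammer_nonneg)
  have "real n * ?P (Suc n) = (real n + real k) * ?P n"
    by (metis add.commute of_nat_Suc pochhammer_rec pochhammer_rec')
  then have "real n * (d N * ?P (Suc n)) = (real n + real k) * (d N * ?P n)"
    by (metis mult.left_commute)
  also have "\<dots> \<le> (real n + real k) * (d n * ?P N)"
    using step(3) by (intro mult_left_mono) auto
  also have "\<dots> \<le> (d (Suc n) * real n) * ?P N"
    using mult_right_mono[OF increment[OF step(1)] \<open>0 \<le> ?P N\<close>] by (simp add: ac_simps)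
  finally show ?case
    using \<open>0 < n\<close> by (simp add: algebra_simps)
qed

lemma eventually_less_powr_of_limsup:
  fixes d :: "nat \<Rightarrow> real"
  assumes pos: "\<And>n. 0 < d n"
    and "limsup (\<lambda>n. ereal (ln (d n) / ln (real n))) < ereal M"
  shows "eventually (\<lambda>n. d n < real n powr M) sequentially"
proof -
  have "eventually (\<lambda>n. ln (d n) / ln (real n) < M \<and> 2 \<le> n) sequentially"
    using Limsup_lessD[OF assms(2)] eventually_ge_at_top[of 2]
    by eventually_elim simp
  then show ?thesis
  proof eventually_elim
    case (elim n)
    then have "0 < ln (real n)"
      by simp
    with elim have "ln (d n) < M * ln (real n)"
      by (simp add: pos_divide_less_eq)
    then have "exp (ln (d n)) < exp (M * ln (real n))"
      by simp
    then show ?case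
      using pos[of n] elim by (simp add: powr_def)
  qed
qed

lemma not_eventually_less_power_of_increments:
  fixes d :: "nat \<Rightarrow> real"
  assumes "0 < N" and "1 \<le> d N"
    and increment: "\<And>n. N \<le> n \<Longrightarrow> d n * (real n + real (Suc m)) \<le> d (Suc n) * real n"
  shows "\<not> eventually (\<lambda>n. d n < real n ^ m) sequentially"
proof
  let ?P = "\<lambda>n. pochhammer (real n) (Suc m)"
  obtain j :: nat where j: "?P N < real j"
    using reals_Archimedean2 by blast
  assume "eventually (\<lambda>n. d n < real n ^ m) sequentially"
  with eventually_ge_at_top[of N] eventually_ge_at_top[of j]
  have "eventually (\<lambda>n. N \<le> n \<and> ?P N < real n \<and> d n < real n ^ m) sequentially"
    by eventually_elim (use j in \<open>auto intro: less_le_trans\<close>)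
  then obtain n where n: "N \<le> n" "?P N < real n" "d n < real n ^ m"
    using eventually_happens' by force
  have "real n ^ Suc m \<le> ?P n"
    by (rule power_le_pochhammer) simp
  also have "\<dots> \<le> d N * ?P n"
    using mult_right_mono[OF \<open>1 \<le> d N\<close>, of "?P n"] n(1) \<open>0 < N\<close>
    by (simp add: pochhammer_nonneg)
  also have "\<dots> \<le> d n * ?P N"
    using pochhammer_le_of_increments[OF \<open>0 < N\<close> increment n(1)] .
  also have "\<dots> < real n ^ m * ?P N"
    using n(3) \<open>0 < N\<close> by (simp add: pochhammer_pos)
  also have "\<dots> < real n ^ m * real n"
    using n(1,2) \<open>0 < N\<close> by (intro mult_strict_left_mono) auto
  finally show False
    by (simp add: mult.commute)
qed

lemma small_relative_increments_of_polynomial_growth: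
  fixes d :: "nat \<Rightarrow> real"
  assumes ge1: "\<And>n. d n \<ge> 1"
    and gk: "limsup (\<lambda>n. ereal (ln (d n) / ln (real n))) < \<infinity>"
  shows "\<exists>C::real. C > 0 \<and> infinite {n. n > 0 \<and> d n > C * real n * (d (Suc n) - d n)}"
proof -
  obtain m :: nat where m: "limsup (\<lambda>n. ereal (ln (d n) / ln (real n))) < ereal (real m)"
    using gk less_PInf_Ex_of_nat by auto
  have "eventually (\<lambda>n. d n < real n powr real m) sequentially"
    using eventually_less_powr_of_limsup[OF _ m] ge1 by (meson less_le_trans zero_less_one)
  then have bound: "eventually (\<lambda>n. d n < real n ^ m) sequentially"
    using eventually_gt_at_top[of 0] by eventually_elim (simp add: powr_realpow)
  show ?thesis
  proof (intro exI conjI notI)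
    show "(0::real) < 1 / real (Suc m)" by simp
    assume "finite {n. n > 0 \<and> d n > 1 / real (Suc m) * real n * (d (Suc n) - d n)}"
    then obtain N0 where N0: "\<And>n. 0 < n \<Longrightarrow> N0 < n \<Longrightarrow>
        \<not> d n > 1 / real (Suc m) * real n * (d (Suc n) - d n)"
      by (metis (no_types, lifting) finite_nat_set_iff_bounded_le mem_Collect_eq not_le)
    have "d n * (real n + real (Suc m)) \<le> d (Suc n) * real n" if "Suc N0 \<le> n" for n
    proof -
      have "d n * real (Suc m) \<le> real n * (d (Suc n) - d n)"
        using N0[of n] that by (simp add: field_simps)
      then show ?thesis by (simp add: algebra_simps)
    qed
    then show False
      using not_eventually_less_power_of_increments[of "Suc N0" d m] ge1 bound by blast
  qed
qed

context vector_space
begin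

lemma dim_pos_finitely_spanned:
  assumes "S \<subseteq> span W" "finite W" "x \<in> S" "x \<noteq> 0"
  shows "0 < dim S"
proof -
  obtain B where B: "B \<subseteq> S" "independent B" "S \<subseteq> span B" "card B = dim S"
    using basis_exists by blast
  have "finite B"
    using independent_span_bound[OF assms(2) B(2)] B(1) assms(1) by auto
  moreover have "B \<noteq> {}"
    using B(3) assms(3,4) by auto
  ultimately show ?thesis
    using B(4) card_gt_0_iff by metis
qed

end

context
  fixes scale :: "'k::field \<Rightarrow> 'a::ring_1 \<Rightarrow> 'a"
  assumes alg: "algebra_over scale"
begin

interpretation vector_space scale
  using alg by (simp add: algebra_over_def)

lemma mult_in_span_products:
  assumes x: "x \<in> span S" and y: "y \<in> span T"
  shows "x * y \<in> span {a * b | a b. a \<in> S \<and> b \<in> T}"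
proof -
  have scale_left: "scale c (u * v) = scale c u * v"
    and scale_right: "scale c (u * v) = u * scale c v" for c u v
    using alg by (auto simp: algebra_over_def)
  let ?W = "{a * b | a b. a \<in> S \<and> b \<in> T}"
  have left_factor: "a * y \<in> span ?W" if "a \<in> S" for a
    using y
  proof (induction rule: span_induct_alt)
    case base
    then show ?case by (simp add: span_zero)
  next
    case (step c b z)
    have "a * (scale c b + z) = scale c (a * b) + a * z"
      by (simp add: distrib_left scale_right)
    moreover have "a * b \<in> span ?W"
      using that step(1) by (intro span_base) blast
    ultimately show ?case
      using step(2) by (simp add: span_add span_scale)
  qed
  show ?thesis
    using x
  proof (induction rule: span_induct_alt)
    case base
    then show ?case by (simp add: span_zero)
  next
    case (step c a z)
    have "(scale c a + z) * y = scale c (a * y) + z * y"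
      by (simp add: distrib_right scale_left)
    then show ?case
      using step left_factor by (simp add: span_add span_scale)
  qed
qed

lemma prod_list_in_Vpow:
  "set xs \<subseteq> span B \<Longrightarrow> prod_list xs \<in> Vpow scale B (length xs)"
proof (induction xs)
  case Nil
  show ?case
    unfolding Vpow_def by (intro span_base) auto
next
  case (Cons x xs)
  let ?W = "{prod_list ys | ys. length ys = length xs \<and> set ys \<subseteq> B}"
  have "x * prod_list xs \<in> span {a * b | a b. a \<in> B \<and> b \<in> ?W}"
    using Cons by (intro mult_in_span_products) (auto simp: Vpow_def)
  also have "\<dots> \<subseteq> Vpow scale B (length (x # xs))"
    unfolding Vpow_def
  proof (rule span_mono, safe)
    fix a ys
    assume "a \<in> B" "length ys = length xs" "set ys \<subseteq> B"
    then show "\<exists>zs. a * prod_list ys = prod_list zs \<and> length zs = length (x # xs) \<and> set zs \<subseteq> B"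
      by (intro exI[of _ "a # ys"]) auto
  qed
  finally show ?case by simp
qed

lemma Vpow_span: "Vpow scale (span B) n = Vpow scale B n"
proof
  show "Vpow scale (span B) n \<subseteq> Vpow scale B n"
    unfolding Vpow_def[of _ "span B"]
  proof (rule span_minimal)
    show "{prod_list xs | xs. length xs = n \<and> set xs \<subseteq> span B} \<subseteq> Vpow scale B n"
      using prod_list_in_Vpow by blast
    show "subspace (Vpow scale B n)"
      by (simp add: Vpow_def)
  qed
  show "Vpow scale B n \<subseteq> Vpow scale (span B) n"
    unfolding Vpow_def by (intro span_mono) (auto intro: span_base)
qed

lemma one_in_Vpow: "1 \<in> V \<Longrightarrow> 1 \<in> Vpow scale V n"
  unfolding Vpow_def by (intro span_base CollectI exI[of _ "replicate n 1"]) auto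

lemma dim_Vpow_pos:
  assumes "fin_dim_subspace scale V" and "1 \<in> V"
  shows "0 < dim (Vpow scale V n)"
proof -
  obtain B where "finite B" and V: "span B = V"
    using assms(1) by (auto simp: fin_dim_subspace_def)
  let ?W = "{prod_list ys | ys. length ys = n \<and> set ys \<subseteq> B}"
  have "?W = prod_list ` {ys. set ys \<subseteq> B \<and> length ys = n}"
    by auto
  then have "finite ?W"
    using finite_lists_length_eq[OF \<open>finite B\<close>] by simp
  moreover have "Vpow scale V n = span ?W"
    using Vpow_span[of B n] by (simp add: V Vpow_def)
  ultimately show ?thesis
    using one_in_Vpow[OF assms(2)] by (intro dim_pos_finitely_spanned) auto
qed

end

theorem lemma2p4:
  fixes scale :: "'k::field \<Rightarrow> 'a::ring_1 \<Rightarrow> 'a"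
    and V :: "'a set"
  assumes alg: "algebra_over scale"
    and finV: "fin_dim_subspace scale V"
    and one: "1 \<in> V"
    and gen: "gen_subalgebra scale V = UNIV"
    and gk: "GKdim_wrt scale V < \<infinity>"
  shows "\<exists>C::real. C > 0 \<and>
    infinite {n::nat. n > 0 \<and>
      real (vector_space.dim scale (Vpow scale V n)) >
        C * real n * (real (vector_space.dim scale (Vpow scale V (Suc n)))
                      - real (vector_space.dim scale (Vpow scale V n)))}"
proof (rule small_relative_increments_of_polynomial_growth)
  show "1 \<le> real (vector_space.dim scale (Vpow scale V n))" for n
    using dim_Vpow_pos[OF alg finV one, of n] by simp
  show "limsup (\<lambda>n. ereal (ln (real (vector_space.dim scale (Vpow scale V n))) / ln (real n))) < \<infinity>"
    using gk by (simp add: GKdim_wrt_def)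
qed

end
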